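(* $$\sum_{n=0}^{\infty}\frac{(-1)^{m_n}}{c(n)}=\frac12 .$$
   Context: For $n\ge 0$, $c(n)=\sum_{i=0}^{n}\left(\binom{n}{i}\bmod 2\right)2^{i}$, the integer whose binary digits form the $n$-th row of Pascal's triangle modulo $2$. $(m_n)_{n\ge0}$ is the Thue–Morse sequence: $m_n\equiv s(n)\pmod 2$, where $s(n)$ is the number of $1$'s in the binary expansion of $n$. *)

theory Defs
  imports Complex_Main
begin

definition pascal_mod2_row :: "nat \<Rightarrow> nat" where
  "pascal_mod2_row n = (\<Sum>i=0..n. ((n choose i) mod 2) * 2 ^ i)"

fun bin_ones :: "nat \<Rightarrow> nat" where
  "bin_ones n = (if n = 0 then 0 else n mod 2 + bin_ones (n div 2))"

declare bin_ones.simps[simp del]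

definition thue_morse :: "nat \<Rightarrow> nat" where
  "thue_morse n = bin_ones n mod 2"

end

theory Submission
  imports Defs
begin

text \<open>Evaluate row n of Pascal's triangle mod 2 as a polynomial \<open>P\<^sub>n(x)\<close> instead of only at
\<open>x = 2\<close>. The parity of binomial coefficients (Lucas' theorem mod 2) gives
\<open>P\<^sub>2\<^sub>n(x) = P\<^sub>n(x\<^sup>2)\<close> and \<open>P\<^sub>2\<^sub>n\<^sub>+\<^sub>1(x) = (1 + x) P\<^sub>n(x\<^sup>2)\<close>, while the Thue--Morse sign is
preserved at \<open>2n\<close> and flipped at \<open>2n + 1\<close>. Pairing the terms \<open>2n, 2n + 1\<close> therefore turns the
partial sum up to \<open>2^(K+1)\<close> at \<open>x\<close> into \<open>x / (1 + x)\<close> times the partial sum up to \<open>2^K\<close> at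
\<open>x\<^sup>2\<close>, which telescopes to \<open>(1 - 1/x) / (1 - 1/x^(2^K))\<close>. For \<open>x > 1\<close> the series converges
absolutely since \<open>P\<^sub>n(x) \<ge> x\<^sup>n\<close>, so its sum is \<open>1 - 1/x\<close>, which is \<open>1/2\<close> at \<open>x = 2\<close>.\<close>

lemma choose_double_mod2:
  "(2 * n choose k) mod 2 = (if odd k then 0 else (n choose (k div 2)) mod 2)"
proof (induction n arbitrary: k)
  case 0
  then show ?case by (cases k) auto
next
  case (Suc n)
  show ?case
  proof (cases k)
    case (Suc k')
    then show ?thesis
    proof (cases k')
      case 0
      with \<open>k = Suc k'\<close> show ?thesis by simp
    next
      case (Suc j)
      have "(2 * Suc n choose k) = (2 * n choose Suc (Suc j)) + 2 * (2 * n choose Suc j) + (2 * n choose j)"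
        using \<open>k = Suc k'\<close> Suc by simp
      then have "(2 * Suc n choose k) mod 2 = ((2 * n choose Suc (Suc j)) mod 2 + (2 * n choose j) mod 2) mod 2"
        by presburger
      also have "\<dots> = (if odd k then 0 else (Suc n choose (k div 2)) mod 2)"
        using \<open>k = Suc k'\<close> Suc by (auto simp: Suc.IH mod_add_eq add.commute elim!: evenE)
      finally show ?thesis .
    qed
  qed simp
qed

lemma choose_Suc_double_mod2:
  "(Suc (2 * n) choose k) mod 2 = (n choose (k div 2)) mod 2"
proof (cases k)
  case (Suc j)
  then have "(Suc (2 * n) choose k) mod 2 = ((2 * n choose j) mod 2 + (2 * n choose k) mod 2) mod 2"
    by (simp add: mod_add_eq)
  then show ?thesis
    using Suc by (auto simp: choose_double_mod2 elim!: oddE)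
qed simp

lemma sum_lessThan_double:
  fixes g :: "nat \<Rightarrow> 'a::comm_monoid_add"
  shows "(\<Sum>i<2 * m. g i) = (\<Sum>j<m. g (2 * j) + g (Suc (2 * j)))"
  by (induction m) (simp_all add: ac_simps)

definition pascal_mod2_poly :: "nat \<Rightarrow> 'a::comm_semiring_1 \<Rightarrow> 'a" where
  "pascal_mod2_poly n x = (\<Sum>i\<le>n. of_nat ((n choose i) mod 2) * x ^ i)"

lemma pascal_mod2_poly_eq_sum_lessThan:
  assumes "n < m"
  shows "pascal_mod2_poly n x = (\<Sum>i<m. of_nat ((n choose i) mod 2) * x ^ i)"
  unfolding pascal_mod2_poly_def
  by (rule sum.mono_neutral_left) (use assms in \<open>auto simp: binomial_eq_0\<close>)

lemma pascal_mod2_poly_double: "pascal_mod2_poly (2 * n) x = pascal_mod2_poly n (x\<^sup>2)"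
proof -
  have "pascal_mod2_poly (2 * n) x = (\<Sum>i<2 * Suc n. of_nat ((2 * n choose i) mod 2) * x ^ i)"
    by (rule pascal_mod2_poly_eq_sum_lessThan) simp
  also have "\<dots> = (\<Sum>j<Suc n. of_nat ((n choose j) mod 2) * (x\<^sup>2) ^ j)"
    by (simp add: sum_lessThan_double choose_double_mod2 power_mult)
  also have "\<dots> = pascal_mod2_poly n (x\<^sup>2)"
    by (rule pascal_mod2_poly_eq_sum_lessThan[symmetric]) simp
  finally show ?thesis .
qed

lemma pascal_mod2_poly_Suc_double:
  "pascal_mod2_poly (Suc (2 * n)) x = (1 + x) * pascal_mod2_poly n (x\<^sup>2)"
proof -
  have "pascal_mod2_poly (Suc (2 * n)) x
        = (\<Sum>i<2 * Suc n. of_nat ((Suc (2 * n) choose i) mod 2) * x ^ i)"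
    by (rule pascal_mod2_poly_eq_sum_lessThan) simp
  also have "\<dots> = (\<Sum>j<Suc n. (1 + x) * (of_nat ((n choose j) mod 2) * (x\<^sup>2) ^ j))"
    unfolding sum_lessThan_double
    by (intro sum.cong refl, simp only: choose_Suc_double_mod2) (simp add: algebra_simps flip: power_mult)
  also have "\<dots> = (1 + x) * pascal_mod2_poly n (x\<^sup>2)"
    by (simp add: sum_distrib_left pascal_mod2_poly_eq_sum_lessThan[of n "Suc n"] del: sum.lessThan_Suc)
  finally show ?thesis .
qed

lemma power_le_pascal_mod2_poly:
  fixes x :: "'a::linordered_semidom"
  assumes "0 \<le> x"
  shows "x ^ n \<le> pascal_mod2_poly n x"
proof -
  have "of_nat ((n choose n) mod 2) * x ^ n \<le> pascal_mod2_poly n x"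
    unfolding pascal_mod2_poly_def by (rule member_le_sum) (use assms in auto)
  then show ?thesis by simp
qed

lemma bin_ones_double: "bin_ones (2 * n) = bin_ones n"
  by (cases "n = 0") (simp_all add: bin_ones.simps[of "2 * n"] bin_ones.simps[of 0])

lemma bin_ones_Suc_double: "bin_ones (Suc (2 * n)) = Suc (bin_ones n)"
  by (simp add: bin_ones.simps[of "Suc (2 * n)"])

lemma thue_morse_sign_double: "(-1) ^ thue_morse (2 * n) = (-1 :: 'a::ring_1) ^ thue_morse n"
  by (simp add: thue_morse_def bin_ones_double)

lemma thue_morse_sign_Suc_double:
  "(-1) ^ thue_morse (Suc (2 * n)) = - ((-1 :: 'a::ring_1) ^ thue_morse n)"
  by (simp add: thue_morse_def bin_ones_Suc_double minus_one_power_iff)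

lemma of_nat_pascal_mod2_row: "of_nat (pascal_mod2_row n) = pascal_mod2_poly n (2 :: 'a::comm_semiring_1)"
  by (simp add: pascal_mod2_row_def pascal_mod2_poly_def atLeast0AtMost)

lemma thue_morse_pascal_mod2_pair:
  fixes x :: "'a::field"
  assumes "1 + x \<noteq> 0"
  shows "(-1) ^ thue_morse (2 * j) / pascal_mod2_poly (2 * j) x
           + (-1) ^ thue_morse (Suc (2 * j)) / pascal_mod2_poly (Suc (2 * j)) x
         = x / (1 + x) * ((-1) ^ thue_morse j / pascal_mod2_poly j (x\<^sup>2))"
proof -
  have "q - q / (1 + x) = x / (1 + x) * q" for q
    using assms by (simp add: field_simps)
  then have "a / p + - a / ((1 + x) * p) = x / (1 + x) * (a / p)" for a p
    by (metis diff_conv_add_uminus divide_divide_eq_left minus_divide_left mult.commute)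
  then show ?thesis
    by (simp only: thue_morse_sign_double thue_morse_sign_Suc_double
        pascal_mod2_poly_double pascal_mod2_poly_Suc_double)
qed

lemma thue_morse_pascal_mod2_partial_sum:
  fixes x :: real
  assumes "1 < x"
  shows "(\<Sum>n<2 ^ K. (-1) ^ thue_morse n / pascal_mod2_poly n x) = (1 - 1 / x) / (1 - 1 / x ^ 2 ^ K)"
  using assms
proof (induction K arbitrary: x)
  case 0
  then show ?case by (simp add: pascal_mod2_poly_def thue_morse_def bin_ones.simps)
next
  case (Suc K)
  have "1 < x\<^sup>2"
    using Suc.prems by (simp add: less_1_mult power2_eq_square)
  have "(\<Sum>n<2 ^ Suc K. (-1) ^ thue_morse n / pascal_mod2_poly n x)
        = x / (1 + x) * (\<Sum>j<2 ^ K. (-1) ^ thue_morse j / pascal_mod2_poly j (x\<^sup>2))"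
    using Suc.prems
    by (simp add: sum_lessThan_double thue_morse_pascal_mod2_pair sum_distrib_left)
  also have "\<dots> = x / (1 + x) * ((1 - 1 / x\<^sup>2) / (1 - 1 / x ^ 2 ^ Suc K))"
    by (simp add: Suc.IH[OF \<open>1 < x\<^sup>2\<close>] power_mult)
  also have "\<dots> = (1 - 1 / x) / (1 - 1 / x ^ 2 ^ Suc K)"
  proof -
    have "x / (1 + x) * (1 - 1 / x\<^sup>2) = 1 - 1 / x"
      using Suc.prems by (simp add: divide_simps power2_eq_square) (simp add: algebra_simps)
    then show ?thesis by simp
  qed
  finally show ?case .
qed

theorem thue_morse_pascal_mod2_sums:
  fixes x :: real
  assumes "1 < x"
  shows "(\<lambda>n. (-1) ^ thue_morse n / pascal_mod2_poly n x) sums (1 - 1 / x)"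
proof -
  define f where "f n = (-1) ^ thue_morse n / pascal_mod2_poly n x" for n
  have "norm (f n) \<le> (1 / x) ^ n" for n
  proof -
    have "x ^ n \<le> pascal_mod2_poly n x"
      using assms by (intro power_le_pascal_mod2_poly) simp
    moreover have "0 < x ^ n"
      using assms by simp
    ultimately show ?thesis
      by (simp add: f_def abs_mult power_one_over frac_le)
  qed
  then have "summable f"
    using assms by (intro summable_comparison_test[OF _ summable_geometric]) auto
  have "strict_mono (\<lambda>K. 2 ^ K :: nat)"
    by (rule strict_monoI) simp
  then have "(\<lambda>K. sum f {..<2 ^ K}) \<longlonglongrightarrow> suminf f"
    using LIMSEQ_subseq_LIMSEQ[OF summable_LIMSEQ[OF \<open>summable f\<close>]] by (simp add: o_def)
  moreover have "(\<lambda>K. sum f {..<2 ^ K}) \<longlonglongrightarrow> (1 - 1 / x) / (1 - 0)"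
  proof -
    have "(\<lambda>n. (1 / x) ^ n) \<longlonglongrightarrow> 0"
      using assms by (intro LIMSEQ_power_zero) simp
    then have "(\<lambda>K. 1 / x ^ 2 ^ K) \<longlonglongrightarrow> 0"
      using LIMSEQ_subseq_LIMSEQ[OF _ \<open>strict_mono (\<lambda>K. 2 ^ K :: nat)\<close>]
      by (simp add: o_def power_one_over)
    then show ?thesis
      unfolding f_def thue_morse_pascal_mod2_partial_sum[OF assms]
      by (intro tendsto_intros) simp_all
  qed
  ultimately have "suminf f = 1 - 1 / x"
    by (simp add: LIMSEQ_unique)
  with \<open>summable f\<close> show ?thesis
    unfolding f_def[abs_def] by (metis summable_sums)
qed

theorem mainTheorem16:
  shows "(\<lambda>n. (-1) ^ thue_morse n / real (pascal_mod2_row n)) sums (1/2 :: real)"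
  using thue_morse_pascal_mod2_sums[of 2] by (simp add: of_nat_pascal_mod2_row)

end
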